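(* Let $G=(V,E)$ be a finite graph and let $\underline{r}^G=(r_v)_{v\in V}\in\mathbb{Z}^{V}$. Let $H$ be an arbitrary $2$-cover of $G$, and let $G\cup G$ denote the disjoint union of two copies of $G$ (itself a $2$-cover of $G$). Let $\underline{r}$ denote the vector induced by $\underline{r}^G$ on $H$ and on $G\cup G$, i.e. each lift $u'$ of a vertex $u\in V$ gets value $r_{u'}=r_u$. Then $$\varepsilon_{\underline{r}}(G\cup G)\geq \varepsilon_{\underline{r}}(H).$$ In other words, for any $\underline{r}\in\mathbb{Z}^{V}$, among all $2$-covers $H$ of $G$ the quantity $\varepsilon_{\underline{r}}(H)$ is maximized by $G\cup G$.
   Context: A $2$-cover of $G$ is a graph with vertex set $V\times\{0,1\}$ obtained by choosing, for every edge $uv\in E$, either the pair of edges $(u,0)(v,0),(u,1)(v,1)$ or the pair $(u,0)(v,1),(u,1)(v,0)$, and having no other edges. For a graph $F$ and a vector $\underline{r}=(r_v)\in\mathbb{Z}^{V(F)}$, $\varepsilon_{\underline{r}}(F)$ denotes the number of orientations of $F$ in which every vertex $v$ has in-degree exactly $r_v$. *)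

theory Defs
  imports Main
begin

definition simple_graph :: "'a set \<Rightarrow> 'a set set \<Rightarrow> bool" where
  "simple_graph V E \<longleftrightarrow> finite V \<and> (\<forall>e\<in>E. \<exists>u v. u \<in> V \<and> v \<in> V \<and> u \<noteq> v \<and> e = {u, v})"

text \<open>An orientation of (V,E) is encoded by its head map: each edge e is sent to the endpoint
  it points to (its head); the map is extensional (undefined off E).\<close>
definition orientations :: "'a set set \<Rightarrow> ('a set \<Rightarrow> 'a) set" where
  "orientations E = {h. (\<forall>e\<in>E. h e \<in> e) \<and> (\<forall>e. e \<notin> E \<longrightarrow> h e = undefined)}"

definition indeg :: "'a set set \<Rightarrow> ('a set \<Rightarrow> 'a) \<Rightarrow> 'a \<Rightarrow> nat" where
  "indeg E h v = card {e \<in> E. h e = v}"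

definition eps :: "'a set \<Rightarrow> 'a set set \<Rightarrow> ('a \<Rightarrow> int) \<Rightarrow> nat" where
  "eps V E r = card {h \<in> orientations E. \<forall>v\<in>V. int (indeg E h v) = r v}"

text \<open>Edges of the 2-cover determined by the choice s: s e = False picks
  (u,0)(v,0),(u,1)(v,1); s e = True picks (u,0)(v,1),(u,1)(v,0). Layers {0,1} are encoded by bool.\<close>
definition cover_edges :: "'a set set \<Rightarrow> ('a set \<Rightarrow> bool) \<Rightarrow> ('a \<times> bool) set set" where
  "cover_edges E s = {{(u, i), (v, j)} | u v i j. {u, v} \<in> E \<and> ((i \<noteq> j) = s {u, v})}"

definition is_two_cover :: "'a set set \<Rightarrow> ('a \<times> bool) set set \<Rightarrow> bool" where
  "is_two_cover E EH \<longleftrightarrow> (\<exists>s. EH = cover_edges E s)"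

definition double_edges :: "'a set set \<Rightarrow> ('a \<times> bool) set set" where
  "double_edges E = cover_edges E (\<lambda>_. False)"

definition lift_vec :: "('a \<Rightarrow> int) \<Rightarrow> ('a \<times> bool) \<Rightarrow> int" where
  "lift_vec r x = r (fst x)"

end

theory Submission
  imports Defs "HOL-Library.FuncSet" Complex_Main
begin

text \<open>An orientation is a choice of a head for every edge, so \<open>\<epsilon>\<^sub>r(H)\<close> counts the solutions of a
  linear system in the in-degrees. At each vertex \<open>u\<close> of \<open>G\<close> we write the constraints as
  \<open>indeg (u, 0) + indeg (u, 1) = 2 r\<^sub>u\<close> and \<open>indeg (u, 0) - indeg (u, 1) = 0\<close> and detect them
  with \<open>K\<close>-th roots of unity. The Fourier variables are then an angle \<open>\<psi>\<^sub>u\<close> for the first and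
  an angle \<open>\<phi>\<^sub>u\<close> for the second constraint, and the two lifts of an edge \<open>uv\<close> contribute the
  factor \<open>cis (2 \<psi>\<^sub>u) + cis (2 \<psi>\<^sub>v) + 2 cis (\<psi>\<^sub>u + \<psi>\<^sub>v) (cos \<phi>\<^sub>u cos \<phi>\<^sub>v \<plusminus> sin \<phi>\<^sub>u sin \<phi>\<^sub>v)\<close>,
  with the minus sign exactly for crossing edges. Expanding the product over the three summands of
  each factor writes \<open>K\<^bsup>2|V|\<^esup> \<epsilon>\<^sub>r(H)\<close> as a sum of terms \<open>\<plusminus> S\<^sub>c D\<^sub>c\<close>, where \<open>S\<^sub>c\<close> again counts
  the solutions of a linear system and \<open>D\<^sub>c\<close> factors over the vertices into sums of
  \<open>cos\<^sup>a \<cdot> sin\<^sup>b\<close> over the \<open>K\<close>-th roots of unity, which are nonnegative for even \<open>K\<close>. Only the signs depend on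
  \<open>H\<close>, and for \<open>G \<union> G\<close> they are all positive.\<close>

section \<open>Counting with roots of unity\<close>

definition root_angle :: "nat \<Rightarrow> nat \<Rightarrow> real" where
  "root_angle K j = 2 * pi * real j / real K"

lemma cis_sum: "finite A \<Longrightarrow> cis (\<Sum>x\<in>A. f x) = (\<Prod>x\<in>A. cis (f x))"
  by (induction A rule: finite_induct) (simp_all flip: cis_mult)

lemma sum_cis_root_angle:
  fixes n :: int
  assumes K: "K > 0" and n: "\<bar>n\<bar> < int K"
  shows "(\<Sum>j<K. cis (root_angle K j * of_int n)) = (if n = 0 then of_nat K else 0)"
proof (cases "n = 0")
  case True
  then show ?thesis by simp
next
  case False
  define w where "w = cis (2 * pi * of_int n / real K)"
  have "w \<noteq> 1"
  proof
    assume "w = 1"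
    then have "cos (2 * pi * of_int n / real K) = 1" unfolding w_def by (simp add: complex_eq_iff)
    then obtain k :: int where "2 * pi * of_int n / real K = real_of_int k * 2 * pi"
      by (subst (asm) cos_one_2pi_int) blast
    then have "real_of_int n = real_of_int (k * int K)" using K by (simp add: field_simps)
    then have nk: "n = k * int K" by linarith
    with False have "\<bar>k\<bar> \<ge> 1" by auto
    then have "\<bar>k\<bar> * int K \<ge> int K" by (simp add: mult_le_cancel_right1)
    with n nk show False by (simp add: abs_mult)
  qed
  have "(\<Sum>j<K. cis (root_angle K j * of_int n)) = (\<Sum>j<K. w ^ j)"
    by (intro sum.cong refl) (simp add: root_angle_def w_def DeMoivre mult_ac)
  also have "\<dots> = (w ^ K - 1) / (w - 1)"
    using \<open>w \<noteq> 1\<close> by (subst geometric_sum) auto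
  also have "w ^ K = cis (2 * pi * of_int n)"
    using K by (simp add: w_def DeMoivre)
  also have "\<dots> = 1"
    by (metis Ints_of_int cis_multiple_2pi)
  finally show ?thesis using False by simp
qed

lemma sum_mult_of_bool_eq_point:
  fixes f :: "'a \<Rightarrow> 'b :: semiring_1"
  assumes "finite A" and "p \<in> A"
  shows "(\<Sum>x\<in>A. f x * of_bool (x = p)) = f p"
proof -
  have "(\<Sum>x\<in>A. f x * of_bool (x = p)) = (\<Sum>x\<in>A. if x = p then f x else 0)"
    by (intro sum.cong) auto
  then show ?thesis
    using assms by simp
qed

lemma sum_PiE_cis_linear:
  fixes \<theta> :: "'t \<Rightarrow> real" and m :: "'l \<Rightarrow> 'y \<Rightarrow> 't \<Rightarrow> int" and R :: "'t \<Rightarrow> int"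
  assumes T: "finite T" and L: "finite L" and Y: "\<And>l. l \<in> L \<Longrightarrow> finite (Y l)"
  shows "(\<Sum>h\<in>PiE L Y. cis (\<Sum>t\<in>T. \<theta> t * of_int ((\<Sum>l\<in>L. m l (h l) t) - R t))) =
    cis (- (\<Sum>t\<in>T. \<theta> t * of_int (R t))) * (\<Prod>l\<in>L. \<Sum>y\<in>Y l. cis (\<Sum>t\<in>T. \<theta> t * of_int (m l y t)))"
proof -
  have "cis (\<Sum>t\<in>T. \<theta> t * of_int ((\<Sum>l\<in>L. m l (h l) t) - R t)) =
      cis (- (\<Sum>t\<in>T. \<theta> t * of_int (R t))) * (\<Prod>l\<in>L. cis (\<Sum>t\<in>T. \<theta> t * of_int (m l (h l) t)))" for h
  proof -
    have "(\<Sum>t\<in>T. \<theta> t * of_int ((\<Sum>l\<in>L. m l (h l) t) - R t)) =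
        - (\<Sum>t\<in>T. \<theta> t * of_int (R t)) + (\<Sum>l\<in>L. \<Sum>t\<in>T. \<theta> t * of_int (m l (h l) t))"
      by (simp add: sum.swap[of _ L] sum_distrib_left algebra_simps sum_subtractf)
    then show ?thesis
      unfolding cis_sum[OF L, symmetric] cis_mult by simp
  qed
  then show ?thesis
    by (simp add: sum_distrib_left prod_sum_PiE[OF L Y])
qed

lemma card_solutions_Fourier:
  fixes m :: "'l \<Rightarrow> 'y \<Rightarrow> 't \<Rightarrow> int" and R :: "'t \<Rightarrow> int"
  assumes T: "finite T" and L: "finite L" and Y: "\<And>l. l \<in> L \<Longrightarrow> finite (Y l)" and K: "K > 0"
    and bound: "\<And>h t. h \<in> PiE L Y \<Longrightarrow> t \<in> T \<Longrightarrow> \<bar>(\<Sum>l\<in>L. m l (h l) t) - R t\<bar> < int K"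
  shows "of_nat (K ^ card T * card {h \<in> PiE L Y. \<forall>t\<in>T. (\<Sum>l\<in>L. m l (h l) t) = R t}) =
    (\<Sum>\<Theta>\<in>PiE T (\<lambda>_. {..<K}). cis (- (\<Sum>t\<in>T. root_angle K (\<Theta> t) * of_int (R t))) *
       (\<Prod>l\<in>L. \<Sum>y\<in>Y l. cis (\<Sum>t\<in>T. root_angle K (\<Theta> t) * of_int (m l y t))))"
proof -
  let ?d = "\<lambda>h t. (\<Sum>l\<in>L. m l (h l) t) - R t"
  have fin: "finite (PiE L Y)" using L Y by (intro finite_PiE) auto
  have indicator: "(\<Prod>t\<in>T. if ?d h t = 0 then 1 else 0 :: complex) = (if \<forall>t\<in>T. ?d h t = 0 then 1 else 0)" for h
    using T by (auto simp: prod_zero_iff intro!: prod.neutral)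
  have "of_nat (K ^ card T * card {h \<in> PiE L Y. \<forall>t\<in>T. ?d h t = 0}) =
      of_nat K ^ card T * (\<Sum>h\<in>PiE L Y. if \<forall>t\<in>T. ?d h t = 0 then 1 else 0 :: complex)"
    using fin by (simp flip: sum.inter_filter)
  also have "\<dots> = (\<Sum>h\<in>PiE L Y. \<Prod>t\<in>T. of_nat K * (if ?d h t = 0 then 1 else 0 :: complex))"
    by (simp only: prod.distrib indicator sum_distrib_left prod_constant)
  also have "\<dots> = (\<Sum>h\<in>PiE L Y. \<Prod>t\<in>T. \<Sum>j<K. cis (root_angle K j * of_int (?d h t)))"
    using sum_cis_root_angle[OF K bound] by (intro sum.cong prod.cong refl) auto
  also have "\<dots> = (\<Sum>\<Theta>\<in>PiE T (\<lambda>_. {..<K}). \<Sum>h\<in>PiE L Y. cis (\<Sum>t\<in>T. root_angle K (\<Theta> t) * of_int (?d h t)))"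
    using T by (simp add: prod_sum_PiE cis_sum sum.swap[of _ "PiE L Y"])
  also have "\<dots> = (\<Sum>\<Theta>\<in>PiE T (\<lambda>_. {..<K}). cis (- (\<Sum>t\<in>T. root_angle K (\<Theta> t) * of_int (R t))) *
       (\<Prod>l\<in>L. \<Sum>y\<in>Y l. cis (\<Sum>t\<in>T. root_angle K (\<Theta> t) * of_int (m l y t))))"
    by (intro sum.cong refl sum_PiE_cis_linear[OF T L Y])
  finally show ?thesis
    by simp
qed

section \<open>Trigonometric moments\<close>

lemma root_angle_reflect:
  assumes "j < K"
  shows "cos (root_angle K ((K - j) mod K)) = cos (root_angle K j)"
    and "sin (root_angle K ((K - j) mod K)) = - sin (root_angle K j)"
proof -
  have "cos (root_angle K ((K - j) mod K)) = cos (root_angle K j) \<and>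
      sin (root_angle K ((K - j) mod K)) = - sin (root_angle K j)"
  proof (cases "j = 0")
    case True
    then show ?thesis by (simp add: root_angle_def)
  next
    case False
    then have "(K - j) mod K = K - j" using assms by simp
    moreover have "root_angle K (K - j) = 2 * pi - root_angle K j"
      using assms by (simp add: root_angle_def field_simps)
    ultimately show ?thesis by (simp add: cos_diff sin_diff)
  qed
  then show "cos (root_angle K ((K - j) mod K)) = cos (root_angle K j)"
    and "sin (root_angle K ((K - j) mod K)) = - sin (root_angle K j)" by auto
qed

lemma root_angle_shift_half:
  assumes K: "K = 2 * L" and "j < K"
  shows "cos (root_angle K ((j + L) mod K)) = - cos (root_angle K j)"
    and "sin (root_angle K ((j + L) mod K)) = - sin (root_angle K j)"
proof -
  have "cos (root_angle K ((j + L) mod K)) = - cos (root_angle K j) \<and>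
      sin (root_angle K ((j + L) mod K)) = - sin (root_angle K j)"
  proof (cases "j < L")
    case True
    then have "(j + L) mod K = j + L" using K by simp
    moreover have "root_angle K (j + L) = root_angle K j + pi"
      using K True by (simp add: root_angle_def field_simps)
    ultimately show ?thesis by simp
  next
    case False
    then have "(j + L) mod K = j - L" using assms by (simp add: mod_if)
    moreover have "root_angle K (j - L) = root_angle K j - pi"
      using assms False by (simp add: root_angle_def field_simps)
    ultimately show ?thesis by (simp add: cos_diff sin_diff)
  qed
  then show "cos (root_angle K ((j + L) mod K)) = - cos (root_angle K j)"
    and "sin (root_angle K ((j + L) mod K)) = - sin (root_angle K j)" by auto
qed

text \<open>If \<open>b\<close> is odd the reflection \<open>j \<mapsto> -j\<close>, and if \<open>a\<close> is odd the half-turn \<open>j \<mapsto> j + K/2\<close>,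
  negates every summand; otherwise all summands are even powers.\<close>
lemma sum_cos_power_sin_power_nonneg:
  assumes K: "K = 2 * L"
  shows "0 \<le> (\<Sum>j<K. cos (root_angle K j) ^ a * sin (root_angle K j) ^ b)"
proof -
  let ?f = "\<lambda>j. cos (root_angle K j) ^ a * sin (root_angle K j) ^ b"
  have "(\<Sum>j<K. ?f j) = (\<Sum>j<K. - ?f j)" if "odd a \<or> odd b"
  proof (cases "odd b")
    case True
    have "(K - (K - j) mod K) mod K = j" if "j < K" for j
      using that by (cases "j = 0") auto
    then show ?thesis
      by (intro sum.reindex_bij_witness[where i = "\<lambda>j. (K - j) mod K" and j = "\<lambda>j. (K - j) mod K"])
        (use root_angle_reflect True in \<open>auto simp: power_minus_odd\<close>)
  next
    case False
    with that have "odd a" by simp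
    have "((j + L) mod K + L) mod K = j" if "j < K" for j
      using that K by (cases "j < L") (auto simp: mod_if)
    then show ?thesis
      by (intro sum.reindex_bij_witness[where i = "\<lambda>j. (j + L) mod K" and j = "\<lambda>j. (j + L) mod K"])
        (use root_angle_shift_half[OF K] \<open>odd a\<close> False in \<open>auto simp: power_minus_odd power_minus_even\<close>)
  qed
  then show ?thesis
    by (cases "odd a \<or> odd b")
      (auto simp: sum_negf zero_le_even_power intro!: sum_nonneg mult_nonneg_nonneg)
qed

definition trig_factor :: "nat \<Rightarrow> real \<Rightarrow> real" where
  "trig_factor k y = (if k = 1 then cos y else if k = 2 then sin y else 1)"

lemma prod_trig_factor:
  assumes "finite S"
  shows "(\<Prod>x\<in>S. trig_factor (k x) y) = cos y ^ card {x\<in>S. k x = 1} * sin y ^ card {x\<in>S. k x = 2}"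
proof -
  have "(\<Prod>x\<in>S. trig_factor (k x) y) =
      (\<Prod>x\<in>S \<inter> {x. k x = 1}. cos y) * (\<Prod>x\<in>S \<inter> - {x. k x = 1}. if k x = 2 then sin y else 1)"
    unfolding trig_factor_def using assms by (rule prod.If_cases)
  also have "(\<Prod>x\<in>S \<inter> - {x. k x = 1}. if k x = 2 then sin y else 1) =
      (\<Prod>x\<in>S \<inter> - {x. k x = 1} \<inter> {x. k x = 2}. sin y) * (\<Prod>x\<in>S \<inter> - {x. k x = 1} \<inter> - {x. k x = 2}. 1)"
    using assms by (intro prod.If_cases) auto
  also have "S \<inter> - {x. k x = 1} \<inter> {x. k x = 2} = {x\<in>S. k x = 2}" by auto
  also have "S \<inter> {x. k x = 1} = {x\<in>S. k x = 1}" by auto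
  finally show ?thesis by simp
qed

lemma sum_prod_trig_factor_nonneg:
  assumes "K = 2 * L" and "finite S"
  shows "0 \<le> (\<Sum>j<K. \<Prod>x\<in>S. trig_factor (k x) (root_angle K j))"
  using sum_cos_power_sin_power_nonneg[OF assms(1)] by (simp add: prod_trig_factor[OF assms(2)])

section \<open>In-degree constraints on two layers\<close>

lemma sum_PiE_times_bool:
  fixes f :: "('a \<times> bool \<Rightarrow> 'c) \<Rightarrow> 'b :: comm_monoid_add"
  shows "(\<Sum>\<Theta>\<in>PiE (V \<times> UNIV) (\<lambda>_. S). f \<Theta>) =
    (\<Sum>\<Psi>\<in>PiE V (\<lambda>_. S). \<Sum>\<Phi>\<in>PiE V (\<lambda>_. S). f (\<lambda>(w, b). if b then \<Phi> w else \<Psi> w))"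
proof -
  define merge where "merge = (\<lambda>(\<Psi>, \<Phi>). \<lambda>(w, b). if b then \<Phi> w else \<Psi> (w :: 'a) :: 'c)"
  have "(\<Sum>\<Psi>\<in>PiE V (\<lambda>_. S). \<Sum>\<Phi>\<in>PiE V (\<lambda>_. S). f (\<lambda>(w, b). if b then \<Phi> w else \<Psi> w)) =
      (\<Sum>x\<in>PiE V (\<lambda>_. S) \<times> PiE V (\<lambda>_. S). f (merge x))"
    unfolding sum.cartesian_product merge_def by (simp add: split_beta)
  also have "\<dots> = (\<Sum>\<Theta>\<in>PiE (V \<times> UNIV) (\<lambda>_. S). f \<Theta>)"
    by (rule sum.reindex_bij_witness[where j = merge and i = "\<lambda>\<Theta>. (\<lambda>w. \<Theta> (w, False), \<lambda>w. \<Theta> (w, True))"])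
      (auto simp: merge_def PiE_def Pi_def extensional_def fun_eq_iff)
  finally show ?thesis ..
qed

text \<open>Row \<open>(w, False)\<close> of the system reads \<open>indeg (w, 0) + indeg (w, 1) = 2 r w\<close>, row
  \<open>(w, True)\<close> reads \<open>indeg (w, 0) - indeg (w, 1) = 0\<close>.\<close>
definition indeg_coeff :: "'a \<times> bool \<Rightarrow> 'a \<times> bool \<Rightarrow> int" where
  "indeg_coeff y t = (if fst y = fst t then (if snd t \<and> snd y then -1 else 1) else 0)"

definition indeg_target :: "('a \<Rightarrow> int) \<Rightarrow> 'a \<times> bool \<Rightarrow> int" where
  "indeg_target r t = (if snd t then 0 else 2 * r (fst t))"

lemma sum_indeg_coeff:
  assumes "finite EH"
  shows "(\<Sum>l\<in>EH. indeg_coeff (h l) (w, b)) =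
    int (indeg EH h (w, False)) + (if b then -1 else 1) * int (indeg EH h (w, True))"
proof -
  have "(\<Sum>l\<in>EH. indeg_coeff (h l) (w, b)) =
      (\<Sum>l\<in>EH. (if h l = (w, False) then 1 else 0) + (if b then -1 else 1) * (if h l = (w, True) then 1 else 0))"
    by (intro sum.cong refl) (auto simp: indeg_coeff_def prod_eq_iff)
  then show ?thesis
    using assms by (simp add: sum.distrib indeg_def flip: sum_distrib_left sum.inter_filter)
qed

lemma eps_lift_vec_eq_card_solutions:
  assumes "finite EH"
  shows "eps (V \<times> UNIV) EH (lift_vec r) =
    card {h \<in> PiE EH (\<lambda>l. l). \<forall>t\<in>V \<times> UNIV. (\<Sum>l\<in>EH. indeg_coeff (h l) t) = indeg_target r t}"
proof -
  have "orientations EH = PiE EH (\<lambda>l. l)"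
    unfolding orientations_def PiE_def Pi_def extensional_def by auto
  moreover have "(\<forall>v\<in>V \<times> UNIV. int (indeg EH h v) = lift_vec r v) \<longleftrightarrow>
      (\<forall>t\<in>V \<times> UNIV. (\<Sum>l\<in>EH. indeg_coeff (h l) t) = indeg_target r t)" for h
    by (auto simp: sum_indeg_coeff[OF assms] indeg_target_def lift_vec_def UNIV_bool)
  ultimately show ?thesis
    unfolding eps_def by simp
qed

definition head_phase :: "('a \<Rightarrow> real) \<Rightarrow> ('a \<Rightarrow> real) \<Rightarrow> 'a \<times> bool \<Rightarrow> real" where
  "head_phase \<psi> \<phi> y = \<psi> (fst y) + (if snd y then - \<phi> (fst y) else \<phi> (fst y))"

lemma sum_indeg_target:
  fixes \<theta> :: "'a \<times> bool \<Rightarrow> real"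
  shows "(\<Sum>t\<in>V \<times> UNIV. \<theta> t * of_int (indeg_target r t)) = (\<Sum>w\<in>V. 2 * of_int (r w) * \<theta> (w, False))"
  by (simp add: sum.cartesian_product' UNIV_bool indeg_target_def mult_ac)

lemma sum_indeg_coeff_phase:
  fixes \<theta> :: "'a \<times> bool \<Rightarrow> real"
  assumes "finite V" and "fst y \<in> V"
  shows "(\<Sum>t\<in>V \<times> UNIV. \<theta> t * of_int (indeg_coeff y t)) = head_phase (\<lambda>w. \<theta> (w, False)) (\<lambda>w. \<theta> (w, True)) y"
proof -
  have "(\<Sum>t\<in>V \<times> UNIV. \<theta> t * of_int (indeg_coeff y t)) =
      (\<Sum>w\<in>V. if w = fst y then head_phase (\<lambda>w. \<theta> (w, False)) (\<lambda>w. \<theta> (w, True)) y else 0)"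
    unfolding sum.cartesian_product'
    by (intro sum.cong refl) (auto simp: UNIV_bool indeg_coeff_def head_phase_def)
  then show ?thesis
    using assms by simp
qed

section \<open>The factor of an edge\<close>

definition pair_term :: "nat \<Rightarrow> real \<Rightarrow> real \<Rightarrow> complex" where
  "pair_term k a b = (if k = 0 then cis (2 * a) + cis (2 * b) else 2 * cis (a + b))"

definition edge_sign :: "bool \<Rightarrow> nat \<Rightarrow> real" where
  "edge_sign crossing k = (if k = 2 \<and> crossing then -1 else 1)"

lemma cis_pair_product:
  "(cis (a + c) + cis (b + d)) * (cis (a - c) + cis (b - d)) =
    (\<Sum>k\<in>{0, 1, 2}. of_real (trig_factor k c * trig_factor k d) * pair_term k a b)"
proof -
  have "(cis (a + c) + cis (b + d)) * (cis (a - c) + cis (b - d)) =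
      cis (2 * a) + cis (2 * b) + (cis (a + b + (c - d)) + cis (a + b - (c - d)))"
    by (simp add: cis_mult algebra_simps)
  also have "cis (a + b + (c - d)) + cis (a + b - (c - d)) = 2 * cis (a + b) * of_real (cos (c - d))"
    by (simp add: complex_eq_iff cos_add sin_add cos_diff sin_diff algebra_simps)
  finally show ?thesis
    by (simp add: pair_term_def trig_factor_def cos_diff algebra_simps)
qed

lemma trig_factor_minus: "trig_factor k (- y) = edge_sign True k * trig_factor k y"
  by (simp add: trig_factor_def edge_sign_def)

lemma abs_edge_sign [simp]: "\<bar>edge_sign b k\<bar> = 1"
  by (simp add: edge_sign_def)

lemma sum_signed_le_sum:
  fixes S W :: "'c \<Rightarrow> real"
  assumes "\<And>c. c \<in> C \<Longrightarrow> \<bar>S c\<bar> \<le> 1" and "\<And>c. c \<in> C \<Longrightarrow> 0 \<le> W c"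
  shows "(\<Sum>c\<in>C. S c * W c) \<le> (\<Sum>c\<in>C. W c)"
proof (rule sum_mono)
  fix c assume "c \<in> C"
  then have "S c * W c \<le> 1 * W c"
    using assms by (intro mult_right_mono) (auto simp: abs_le_iff)
  then show "S c * W c \<le> W c"
    by simp
qed

section \<open>Two-covers of an oriented graph\<close>

locale oriented_graph =
  fixes V :: "'a set" and E :: "'a set set" and src dst :: "'a set \<Rightarrow> 'a"
  assumes finite_V: "finite V"
    and edge_eq: "e \<in> E \<Longrightarrow> e = {src e, dst e}"
    and src_ne_dst: "e \<in> E \<Longrightarrow> src e \<noteq> dst e"
    and src_in_V: "e \<in> E \<Longrightarrow> src e \<in> V"
    and dst_in_V: "e \<in> E \<Longrightarrow> dst e \<in> V"
begin

lemma finite_E: "finite E"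
proof (rule finite_subset)
  show "E \<subseteq> Pow V"
    using edge_eq src_in_V dst_in_V by (metis PowI empty_subsetI insert_subset subsetI)
  show "finite (Pow V)"
    using finite_V by simp
qed

definition lift :: "('a set \<Rightarrow> bool) \<Rightarrow> 'a set \<Rightarrow> bool \<Rightarrow> ('a \<times> bool) set" where
  "lift s e i = {(src e, i), (dst e, i \<noteq> s e)}"

lemma cover_edges_eq_image: "cover_edges E s = (\<lambda>(e, i). lift s e i) ` (E \<times> UNIV)"
proof (intro equalityI subsetI)
  fix x assume "x \<in> cover_edges E s"
  then obtain u v i j where x: "x = {(u, i), (v, j)}" and e: "{u, v} \<in> E" and ij: "(i \<noteq> j) = s {u, v}"
    unfolding cover_edges_def by blast
  let ?e = "{u, v}"
  have "(u = src ?e \<and> v = dst ?e) \<or> (u = dst ?e \<and> v = src ?e)"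
    using edge_eq[OF e] src_ne_dst[OF e] by (auto simp: doubleton_eq_iff)
  then have "x = lift s ?e i \<or> x = lift s ?e j"
    using x ij unfolding lift_def by auto
  with e show "x \<in> (\<lambda>(e, i). lift s e i) ` (E \<times> UNIV)"
    by blast
next
  fix x assume "x \<in> (\<lambda>(e, i). lift s e i) ` (E \<times> UNIV)"
  then obtain e i where "e \<in> E" and x: "x = lift s e i"
    by auto
  then have "{src e, dst e} \<in> E" and "s {src e, dst e} = s e"
    using edge_eq by auto
  with x show "x \<in> cover_edges E s"
    unfolding cover_edges_def lift_def by blast
qed

lemma inj_on_lift: "inj_on (\<lambda>(e, i). lift s e i) (E \<times> UNIV)"
proof (rule inj_onI, clarify)
  fix e i e' i' assume e: "e \<in> E" "e' \<in> E" and eq: "lift s e i = lift s e' i'"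
  have "fst ` lift s e i = e" if "e \<in> E" for e i
    using edge_eq[OF that] unfolding lift_def by auto
  with e eq have "e = e'"
    by metis
  moreover have "(src e, i) \<in> lift s e' i'"
    unfolding eq[symmetric] by (simp add: lift_def)
  then have "i = i'"
    using \<open>e = e'\<close> src_ne_dst[OF e(1)] by (auto simp: lift_def)
  ultimately show "e = e' \<and> i = i'" ..
qed

lemma cover_edges_subset: "l \<in> cover_edges E s \<Longrightarrow> l \<subseteq> V \<times> UNIV"
  using src_in_V dst_in_V by (auto simp: cover_edges_eq_image lift_def)

lemma finite_cover_edge: "l \<in> cover_edges E s \<Longrightarrow> finite l"
  by (auto simp: cover_edges_eq_image lift_def)

lemma finite_cover_edges: "finite (cover_edges E s)"
  using finite_E by (simp add: cover_edges_eq_image)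

lemma card_cover_edges: "card (cover_edges E s) = 2 * card E"
  unfolding cover_edges_eq_image using inj_on_lift finite_E
  by (simp add: card_image card_cartesian_product)

lemma lift_phase_product:
  assumes "e \<in> E"
  shows "(\<Sum>y\<in>lift s e False. cis (head_phase \<psi> \<phi> y)) * (\<Sum>y\<in>lift s e True. cis (head_phase \<psi> \<phi> y)) =
    (\<Sum>k\<in>{0, 1, 2}. of_real (edge_sign (s e) k * trig_factor k (\<phi> (src e)) * trig_factor k (\<phi> (dst e))) *
       pair_term k (\<psi> (src e)) (\<psi> (dst e)))"
proof -
  define d where "d = (if s e then - \<phi> (dst e) else \<phi> (dst e))"
  have "(\<Sum>y\<in>lift s e i. cis (head_phase \<psi> \<phi> y)) =
      cis (\<psi> (src e) + (if i then - \<phi> (src e) else \<phi> (src e))) + cis (\<psi> (dst e) + (if i then - d else d))" for i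
    using src_ne_dst[OF assms] by (auto simp: lift_def head_phase_def d_def)
  then have "(\<Sum>y\<in>lift s e False. cis (head_phase \<psi> \<phi> y)) * (\<Sum>y\<in>lift s e True. cis (head_phase \<psi> \<phi> y)) =
      (cis (\<psi> (src e) + \<phi> (src e)) + cis (\<psi> (dst e) + d)) * (cis (\<psi> (src e) - \<phi> (src e)) + cis (\<psi> (dst e) - d))"
    by simp
  also have "\<dots> = (\<Sum>k\<in>{0, 1, 2}. of_real (trig_factor k (\<phi> (src e)) * trig_factor k d) * pair_term k (\<psi> (src e)) (\<psi> (dst e)))"
    by (rule cis_pair_product)
  also have "\<dots> = (\<Sum>k\<in>{0, 1, 2}. of_real (edge_sign (s e) k * trig_factor k (\<phi> (src e)) *
      trig_factor k (\<phi> (dst e))) * pair_term k (\<psi> (src e)) (\<psi> (dst e)))"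
    by (simp add: d_def trig_factor_minus mult_ac) (simp add: edge_sign_def)
  finally show ?thesis .
qed

lemma prod_cover_edges_phase:
  "(\<Prod>l\<in>cover_edges E s. \<Sum>y\<in>l. cis (head_phase \<psi> \<phi> y)) =
    (\<Sum>c\<in>PiE E (\<lambda>_. {0, 1, 2}).
       of_real ((\<Prod>e\<in>E. edge_sign (s e) (c e)) *
                (\<Prod>e\<in>E. trig_factor (c e) (\<phi> (src e)) * trig_factor (c e) (\<phi> (dst e)))) *
       (\<Prod>e\<in>E. pair_term (c e) (\<psi> (src e)) (\<psi> (dst e))))"
proof -
  let ?G = "\<lambda>l. \<Sum>y\<in>l. cis (head_phase \<psi> \<phi> y)"
  have "(\<Prod>l\<in>cover_edges E s. ?G l) = (\<Prod>x\<in>E \<times> UNIV. ?G (case x of (e, i) \<Rightarrow> lift s e i))"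
    unfolding cover_edges_eq_image by (subst prod.reindex[OF inj_on_lift]) (simp add: comp_def)
  also have "\<dots> = (\<Prod>e\<in>E. ?G (lift s e False) * ?G (lift s e True))"
    by (simp add: prod.cartesian_product' UNIV_bool mult.commute)
  also have "\<dots> = (\<Prod>e\<in>E. \<Sum>k\<in>{0, 1, 2}. of_real (edge_sign (s e) k * trig_factor k (\<phi> (src e)) *
       trig_factor k (\<phi> (dst e))) * pair_term k (\<psi> (src e)) (\<psi> (dst e)))"
    by (intro prod.cong refl lift_phase_product)
  also have "\<dots> = (\<Sum>c\<in>PiE E (\<lambda>_. {0, 1, 2}). \<Prod>e\<in>E. of_real (edge_sign (s e) (c e) *
       trig_factor (c e) (\<phi> (src e)) * trig_factor (c e) (\<phi> (dst e))) * pair_term (c e) (\<psi> (src e)) (\<psi> (dst e)))"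
    using finite_E by (rule prod_sum_PiE) simp
  finally show ?thesis
    by (simp add: prod.distrib mult.assoc)
qed

lemma eps_cover_Fourier_sum:
  assumes K: "K > 0" and bound: "\<forall>w\<in>V. 2 * int (card E) + 2 * \<bar>r w\<bar> < int K"
  shows "of_nat (K ^ card (V \<times> (UNIV :: bool set)) * eps (V \<times> UNIV) (cover_edges E s) (lift_vec r)) =
    (\<Sum>\<Psi>\<in>PiE V (\<lambda>_. {..<K}). \<Sum>\<Phi>\<in>PiE V (\<lambda>_. {..<K}).
       cis (- (\<Sum>w\<in>V. 2 * of_int (r w) * root_angle K (\<Psi> w))) *
       (\<Prod>l\<in>cover_edges E s. \<Sum>y\<in>l. cis (head_phase (\<lambda>w. root_angle K (\<Psi> w)) (\<lambda>w. root_angle K (\<Phi> w)) y)))"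
proof -
  let ?EH = "cover_edges E s"
  have "of_nat (K ^ card (V \<times> (UNIV :: bool set)) * eps (V \<times> UNIV) ?EH (lift_vec r)) =
      (\<Sum>\<Theta>\<in>PiE (V \<times> UNIV) (\<lambda>_. {..<K}). cis (- (\<Sum>t\<in>V \<times> UNIV. root_angle K (\<Theta> t) * of_int (indeg_target r t))) *
         (\<Prod>l\<in>?EH. \<Sum>y\<in>l. cis (\<Sum>t\<in>V \<times> UNIV. root_angle K (\<Theta> t) * of_int (indeg_coeff y t))))"
    unfolding eps_lift_vec_eq_card_solutions[OF finite_cover_edges]
  proof (rule card_solutions_Fourier)
    fix h t assume "t \<in> V \<times> (UNIV :: bool set)"
    have "\<bar>\<Sum>l\<in>?EH. indeg_coeff (h l) t\<bar> \<le> (\<Sum>l\<in>?EH. 1)"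
      by (rule order_trans[OF sum_abs sum_mono]) (simp add: indeg_coeff_def)
    moreover have "\<bar>indeg_target r t\<bar> \<le> 2 * \<bar>r (fst t)\<bar>"
      by (simp add: indeg_target_def abs_mult)
    ultimately show "\<bar>(\<Sum>l\<in>?EH. indeg_coeff (h l) t) - indeg_target r t\<bar> < int K"
      using bound \<open>t \<in> V \<times> UNIV\<close> by (auto simp: card_cover_edges)
  qed (use finite_V finite_cover_edges finite_cover_edge K in auto)
  also have "\<dots> = (\<Sum>\<Psi>\<in>PiE V (\<lambda>_. {..<K}). \<Sum>\<Phi>\<in>PiE V (\<lambda>_. {..<K}).
       cis (- (\<Sum>w\<in>V. 2 * of_int (r w) * root_angle K (\<Psi> w))) *
       (\<Prod>l\<in>?EH. \<Sum>y\<in>l. cis (head_phase (\<lambda>w. root_angle K (\<Psi> w)) (\<lambda>w. root_angle K (\<Phi> w)) y)))"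
    unfolding sum_PiE_times_bool sum_indeg_target
  proof (intro sum.cong prod.cong refl arg_cong2[where f = "(*)"] arg_cong[where f = cis])
    fix \<Psi> \<Phi> :: "'a \<Rightarrow> nat" and l y assume "l \<in> ?EH" "y \<in> l"
    then have "fst y \<in> V"
      by (metis cover_edges_subset mem_Times_iff subsetD)
    then show "(\<Sum>t\<in>V \<times> UNIV. root_angle K ((\<lambda>(w, b). if b then \<Phi> w else \<Psi> w) t) * of_int (indeg_coeff y t)) =
        head_phase (\<lambda>w. root_angle K (\<Psi> w)) (\<lambda>w. root_angle K (\<Phi> w)) y"
      by (simp add: sum_indeg_coeff_phase[OF finite_V])
  qed simp
  finally show ?thesis .
qed

definition sum_part :: "nat \<Rightarrow> ('a \<Rightarrow> int) \<Rightarrow> ('a set \<Rightarrow> nat) \<Rightarrow> complex" where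
  "sum_part K r c = (\<Sum>\<Psi>\<in>PiE V (\<lambda>_. {..<K}). cis (- (\<Sum>w\<in>V. 2 * of_int (r w) * root_angle K (\<Psi> w))) *
     (\<Prod>e\<in>E. pair_term (c e) (root_angle K (\<Psi> (src e))) (root_angle K (\<Psi> (dst e)))))"

definition diff_part :: "nat \<Rightarrow> ('a set \<Rightarrow> nat) \<Rightarrow> real" where
  "diff_part K c = (\<Sum>\<Phi>\<in>PiE V (\<lambda>_. {..<K}).
     \<Prod>e\<in>E. trig_factor (c e) (root_angle K (\<Phi> (src e))) * trig_factor (c e) (root_angle K (\<Phi> (dst e))))"

lemma eps_cover_expansion:
  assumes "K > 0" and "\<forall>w\<in>V. 2 * int (card E) + 2 * \<bar>r w\<bar> < int K"
  shows "of_nat (K ^ card (V \<times> (UNIV :: bool set)) * eps (V \<times> UNIV) (cover_edges E s) (lift_vec r)) =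
    (\<Sum>c\<in>PiE E (\<lambda>_. {0, 1, 2}). of_real ((\<Prod>e\<in>E. edge_sign (s e) (c e)) * diff_part K c) * sum_part K r c)"
proof -
  let ?C = "PiE E (\<lambda>_. {0, 1, 2 :: nat})" and ?A = "PiE V (\<lambda>_. {..<K})"
  let ?X = "\<lambda>\<Psi>. cis (- (\<Sum>w\<in>V. 2 * of_int (r w) * root_angle K (\<Psi> w)))"
  let ?S = "\<lambda>c. \<Prod>e\<in>E. edge_sign (s e) (c e)"
  let ?D = "\<lambda>c \<Phi>. \<Prod>e\<in>E. trig_factor (c e) (root_angle K (\<Phi> (src e))) * trig_factor (c e) (root_angle K (\<Phi> (dst e)))"
  let ?P = "\<lambda>c \<Psi>. \<Prod>e\<in>E. pair_term (c e) (root_angle K (\<Psi> (src e))) (root_angle K (\<Psi> (dst e)))"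
  have "of_nat (K ^ card (V \<times> (UNIV :: bool set)) * eps (V \<times> UNIV) (cover_edges E s) (lift_vec r)) =
      (\<Sum>\<Psi>\<in>?A. \<Sum>\<Phi>\<in>?A. ?X \<Psi> * (\<Sum>c\<in>?C. of_real (?S c * ?D c \<Phi>) * ?P c \<Psi>))"
    by (simp only: eps_cover_Fourier_sum[OF assms] prod_cover_edges_phase)
  also have "\<dots> = (\<Sum>\<Psi>\<in>?A. \<Sum>c\<in>?C. \<Sum>\<Phi>\<in>?A. of_real (?S c * ?D c \<Phi>) * (?X \<Psi> * ?P c \<Psi>))"
    by (intro sum.cong refl) (simp only: sum_distrib_left sum.swap[of _ ?A] mult.left_commute)
  also have "\<dots> = (\<Sum>c\<in>?C. of_real (?S c * diff_part K c) * sum_part K r c)"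
    unfolding sum_part_def diff_part_def
    by (subst sum.swap) (simp only: sum_distrib_left sum_distrib_right of_real_sum)
  finally show ?thesis .
qed

text \<open>\<open>sum_part K r c\<close> counts, up to the factor \<open>K ^ card V\<close>, the ways to send both heads of each
  edge \<open>e\<close> with \<open>c e = 0\<close> to a common endpoint such that every \<open>w\<close> receives \<open>2 r w\<close> heads in
  total, the edges with \<open>c e \<noteq> 0\<close> giving one head to each endpoint.\<close>
lemma sum_part_in_Nats:
  assumes K: "K > 0" and bound: "\<forall>w\<in>V. 2 * int (card E) + 2 * \<bar>r w\<bar> < int K"
  shows "sum_part K r c \<in> \<nat>"
proof -
  define heads :: "'a set \<Rightarrow> bool \<Rightarrow> 'a \<times> 'a" where
    "heads e y = (if c e = 0 then (if y then (dst e, dst e) else (src e, src e)) else (src e, dst e))" for e y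
  define m :: "'a set \<Rightarrow> bool \<Rightarrow> 'a \<Rightarrow> int" where
    "m e y w = of_bool (w = fst (heads e y)) + of_bool (w = snd (heads e y))" for e y w
  have pair: "pair_term (c e) (\<theta> (src e)) (\<theta> (dst e)) = (\<Sum>y\<in>UNIV. cis (\<Sum>w\<in>V. \<theta> w * of_int (m e y w)))"
    if "e \<in> E" for e and \<theta> :: "'a \<Rightarrow> real"
  proof -
    have "fst (heads e y) \<in> V" "snd (heads e y) \<in> V" for y
      using src_in_V[OF that] dst_in_V[OF that] by (auto simp: heads_def)
    then have "(\<Sum>w\<in>V. \<theta> w * of_int (m e y w)) = \<theta> (fst (heads e y)) + \<theta> (snd (heads e y))" for y
      using finite_V by (simp only: m_def of_int_add of_int_of_bool distrib_left sum.distrib sum_mult_of_bool_eq_point)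
    then show ?thesis
      by (simp add: UNIV_bool pair_term_def heads_def)
  qed
  have "of_nat (K ^ card V * card {h \<in> PiE E (\<lambda>_. UNIV). \<forall>w\<in>V. (\<Sum>e\<in>E. m e (h e) w) = 2 * r w}) =
      (\<Sum>\<Psi>\<in>PiE V (\<lambda>_. {..<K}). cis (- (\<Sum>w\<in>V. root_angle K (\<Psi> w) * of_int (2 * r w))) *
         (\<Prod>e\<in>E. \<Sum>y\<in>UNIV. cis (\<Sum>w\<in>V. root_angle K (\<Psi> w) * of_int (m e y w))))"
  proof (rule card_solutions_Fourier[OF finite_V finite_E _ K])
    fix h w assume "w \<in> V"
    have "\<bar>\<Sum>e\<in>E. m e (h e) w\<bar> \<le> (\<Sum>e\<in>E. 2)"
      by (rule order_trans[OF sum_abs sum_mono]) (simp add: m_def)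
    then show "\<bar>(\<Sum>e\<in>E. m e (h e) w) - 2 * r w\<bar> < int K"
      using bound \<open>w \<in> V\<close> by auto
  qed simp
  also have "\<dots> = sum_part K r c"
    unfolding sum_part_def
  proof (intro sum.cong prod.cong refl arg_cong2[where f = "(*)"])
    fix \<Psi> :: "'a \<Rightarrow> nat" and e assume "e \<in> E"
    show "(\<Sum>y\<in>UNIV. cis (\<Sum>w\<in>V. root_angle K (\<Psi> w) * of_int (m e y w))) =
        pair_term (c e) (root_angle K (\<Psi> (src e))) (root_angle K (\<Psi> (dst e)))"
      using pair[OF \<open>e \<in> E\<close>, of "\<lambda>w. root_angle K (\<Psi> w)"] by simp
  qed (simp add: mult_ac)
  finally show ?thesis
    by (rule subst) (rule of_nat_in_Nats)
qed

lemma diff_part_nonneg: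
  assumes K: "K = 2 * L"
  shows "0 \<le> diff_part K c"
proof -
  define endpoint where "endpoint x = (if snd x then dst (fst x) else src (fst x))" for x :: "'a set \<times> bool"
  define F where "F w j = (\<Prod>x\<in>{x \<in> E \<times> UNIV. endpoint x = w}. trig_factor (c (fst x)) (root_angle K j))" for w j
  have "(\<Prod>e\<in>E. trig_factor (c e) (root_angle K (\<Phi> (src e))) * trig_factor (c e) (root_angle K (\<Phi> (dst e)))) =
      (\<Prod>w\<in>V. F w (\<Phi> w))" for \<Phi>
  proof -
    have "(\<Prod>e\<in>E. trig_factor (c e) (root_angle K (\<Phi> (src e))) * trig_factor (c e) (root_angle K (\<Phi> (dst e)))) =
        (\<Prod>x\<in>E \<times> UNIV. trig_factor (c (fst x)) (root_angle K (\<Phi> (endpoint x))))"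
      by (simp add: prod.cartesian_product' UNIV_bool endpoint_def mult.commute)
    also have "\<dots> = (\<Prod>w\<in>V. \<Prod>x\<in>{x \<in> E \<times> UNIV. endpoint x = w}. trig_factor (c (fst x)) (root_angle K (\<Phi> (endpoint x))))"
      using finite_E finite_V src_in_V dst_in_V
      by (intro prod.group[symmetric]) (auto simp: endpoint_def)
    finally show ?thesis
      unfolding F_def by simp
  qed
  then have "diff_part K c = (\<Prod>w\<in>V. \<Sum>j<K. F w j)"
    unfolding diff_part_def using finite_V by (simp add: prod_sum_PiE)
  also have "0 \<le> \<dots>"
    unfolding F_def using finite_E
    by (intro prod_nonneg sum_prod_trig_factor_nonneg[OF K]) auto
  finally show ?thesis .
qed

lemma obtain_Fourier_modulus:
  obtains L where "L > 0" and "\<forall>w\<in>V. 2 * int (card E) + 2 * \<bar>r w\<bar> < int (2 * L)"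
proof
  show "card E + (\<Sum>w\<in>V. nat \<bar>r w\<bar>) + 1 > 0"
    by simp
  show "\<forall>w\<in>V. 2 * int (card E) + 2 * \<bar>r w\<bar> < int (2 * (card E + (\<Sum>w\<in>V. nat \<bar>r w\<bar>) + 1))"
  proof
    fix w assume "w \<in> V"
    then have "int (nat \<bar>r w\<bar>) \<le> int (\<Sum>w\<in>V. nat \<bar>r w\<bar>)"
      using finite_V by (intro of_nat_mono member_le_sum) auto
    then show "2 * int (card E) + 2 * \<bar>r w\<bar> < int (2 * (card E + (\<Sum>w\<in>V. nat \<bar>r w\<bar>) + 1))"
      by simp
  qed
qed

lemma eps_cover_le_eps_double:
  "eps (V \<times> UNIV) (cover_edges E s) (lift_vec r) \<le> eps (V \<times> UNIV) (cover_edges E (\<lambda>_. False)) (lift_vec r)"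
proof -
  obtain L where "L > 0" and bound: "\<forall>w\<in>V. 2 * int (card E) + 2 * \<bar>r w\<bar> < int (2 * L)"
    by (rule obtain_Fourier_modulus)
  define K where "K = 2 * L"
  have "K > 0"
    using \<open>L > 0\<close> by (simp add: K_def)
  define W where "W c = Re (sum_part K r c) * diff_part K c" for c
  have W_nonneg: "0 \<le> W c" for c
  proof -
    obtain n where "sum_part K r c = of_nat n"
      using sum_part_in_Nats[OF \<open>K > 0\<close> bound[folded K_def]] by (auto elim: Nats_cases)
    with diff_part_nonneg[OF K_def] show ?thesis
      by (simp add: W_def)
  qed
  let ?N = "K ^ card (V \<times> (UNIV :: bool set))"
  have expansion: "real (?N * eps (V \<times> UNIV) (cover_edges E s') (lift_vec r)) =
      (\<Sum>c\<in>PiE E (\<lambda>_. {0, 1, 2}). (\<Prod>e\<in>E. edge_sign (s' e) (c e)) * W c)" for s'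
  proof -
    have Re_of_real_mult: "Re (of_real x * z) = x * Re z" for x z
      by simp
    have "real (?N * eps (V \<times> UNIV) (cover_edges E s') (lift_vec r)) =
        Re (of_nat (?N * eps (V \<times> UNIV) (cover_edges E s') (lift_vec r)))"
      by simp
    also have "\<dots> = (\<Sum>c\<in>PiE E (\<lambda>_. {0, 1, 2}). (\<Prod>e\<in>E. edge_sign (s' e) (c e)) * W c)"
      unfolding eps_cover_expansion[OF \<open>K > 0\<close> bound[folded K_def]] Re_sum Re_of_real_mult
      by (simp only: W_def mult_ac)
    finally show ?thesis .
  qed
  have "real (?N * eps (V \<times> UNIV) (cover_edges E s) (lift_vec r)) =
      (\<Sum>c\<in>PiE E (\<lambda>_. {0, 1, 2}). (\<Prod>e\<in>E. edge_sign (s e) (c e)) * W c)"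
    by (rule expansion)
  also have "\<dots> \<le> (\<Sum>c\<in>PiE E (\<lambda>_. {0, 1, 2}). W c)"
    by (rule sum_signed_le_sum) (simp_all add: abs_prod W_nonneg)
  also have "\<dots> = real (?N * eps (V \<times> UNIV) (cover_edges E (\<lambda>_. False)) (lift_vec r))"
    using expansion[of "\<lambda>_. False"] by (simp add: edge_sign_def)
  finally show ?thesis
    using \<open>K > 0\<close> by simp
qed

end

lemma simple_graph_obtain_orientation:
  assumes "simple_graph V E"
  obtains src dst where "oriented_graph V E src dst"
proof -
  have "\<forall>e\<in>E. \<exists>p. fst p \<in> V \<and> snd p \<in> V \<and> fst p \<noteq> snd p \<and> e = {fst p, snd p}"
    using assms unfolding simple_graph_def by force
  then obtain p where "\<forall>e\<in>E. fst (p e) \<in> V \<and> snd (p e) \<in> V \<and> fst (p e) \<noteq> snd (p e) \<and> e = {fst (p e), snd (p e)}"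
    by metis
  then have "oriented_graph V E (\<lambda>e. fst (p e)) (\<lambda>e. snd (p e))"
    using assms by unfold_locales (auto simp: simple_graph_def)
  then show ?thesis ..
qed

theorem theorem1p7:
  fixes V :: "'a set" and E :: "'a set set" and r :: "'a \<Rightarrow> int"
    and EH :: "('a \<times> bool) set set"
  assumes "simple_graph V E"
    and "is_two_cover E EH"
  shows "eps (V \<times> UNIV) (double_edges E) (lift_vec r) \<ge> eps (V \<times> UNIV) EH (lift_vec r)"
proof -
  obtain src dst where "oriented_graph V E src dst"
    using assms(1) by (rule simple_graph_obtain_orientation)
  moreover obtain s where "EH = cover_edges E s"
    using assms(2) unfolding is_two_cover_def by blast
  ultimately show ?thesis
    unfolding double_edges_def by (simp add: oriented_graph.eps_cover_le_eps_double)
qed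

end
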